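(* If \(D\) is a dagger algebra, then so is \(D'\), the algebra \(D\) equipped with the compactoid bornology.
   Context: Let \(V\) be a complete discrete valuation ring with uniformiser \(\pi\). A bornology on a set is a collection of subsets (called bounded) containing all finite subsets and closed under finite unions and under taking subsets. A bornological \(V\)-module is a \(V\)-module with a bornology such that every bounded subset is contained in a bounded \(V\)-submodule; it is complete if every bounded subset is contained in a bounded \(\pi\)-adically complete \(V\)-submodule, and torsionfree if it is torsionfree as a \(V\)-module and \(\pi^{-1}S=\{x:\pi x\in S\}\) is bounded for every bounded \(S\). A bornological \(V\)-algebra is a \(V\)-algebra with such a bornology for which multiplication is bounded; it is semidagger if for every bounded \(S\), the \(V\)-submodule \(\sum_{i\ge 0}\pi^iS^{i+1}\) is bounded. A dagger algebra is a complete, torsionfree, semidagger bornological \(V\)-algebra. A subset \(S\subseteq D\) is compactoid if there is a bounded \(V\)-submodule \(T\subseteq D\) with \(S\subseteq T\) such that for every \(n\in\mathbb N\) there is a finite set \(F_n\subseteq T\) with \(S\subseteq VF_n+\pi^nT\). *)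

theory Defs
  imports Main "HOL.Modules"
begin

text \<open>Complete discrete valuation ring V (an integral domain) with uniformiser pi:
  pi is a nonzero non-unit, every nonzero element is a unit times a power of pi,
  and V is pi-adically complete (it is automatically pi-adically separated).\<close>
definition complete_dvr :: "'v::idom \<Rightarrow> bool" where
  "complete_dvr pi \<longleftrightarrow> pi \<noteq> 0 \<and> \<not> pi dvd 1 \<and>
     (\<forall>x. x \<noteq> 0 \<longrightarrow> (\<exists>u n. u dvd 1 \<and> x = u * pi ^ n)) \<and>
     (\<forall>x :: nat \<Rightarrow> 'v. (\<forall>n. pi ^ n dvd (x (Suc n) - x n)) \<longrightarrow>
        (\<exists>y. \<forall>n. pi ^ n dvd (y - x n)))"

definition pmul :: "('v::comm_ring_1 \<Rightarrow> 'd \<Rightarrow> 'd) \<Rightarrow> 'v \<Rightarrow> nat \<Rightarrow> 'd set \<Rightarrow> 'd set" where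
  "pmul smul pi n T = (\<lambda>t. smul (pi ^ n) t) ` T"

definition bornology :: "'d set set \<Rightarrow> bool" where
  "bornology B \<longleftrightarrow> (\<forall>F. finite F \<longrightarrow> F \<in> B) \<and> (\<forall>S\<in>B. \<forall>T\<in>B. S \<union> T \<in> B) \<and>
     (\<forall>S\<in>B. \<forall>T. T \<subseteq> S \<longrightarrow> T \<in> B)"

definition padic_complete :: "('v::comm_ring_1 \<Rightarrow> 'd::ab_group_add \<Rightarrow> 'd) \<Rightarrow> 'v \<Rightarrow> 'd set \<Rightarrow> bool" where
  "padic_complete smul pi T \<longleftrightarrow> (\<Inter>n. pmul smul pi n T) \<subseteq> {0} \<and>
     (\<forall>x :: nat \<Rightarrow> 'd. (\<forall>n. x n \<in> T) \<and> (\<forall>n. x (Suc n) - x n \<in> pmul smul pi n T) \<longrightarrow>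
        (\<exists>y\<in>T. \<forall>n. y - x n \<in> pmul smul pi n T))"

definition born_module :: "('v::comm_ring_1 \<Rightarrow> 'd::ab_group_add \<Rightarrow> 'd) \<Rightarrow> 'd set set \<Rightarrow> bool" where
  "born_module smul B \<longleftrightarrow> module smul \<and> bornology B \<and>
     (\<forall>S\<in>B. \<exists>T\<in>B. S \<subseteq> T \<and> module.subspace smul T)"

definition born_complete :: "('v::comm_ring_1 \<Rightarrow> 'd::ab_group_add \<Rightarrow> 'd) \<Rightarrow> 'v \<Rightarrow> 'd set set \<Rightarrow> bool" where
  "born_complete smul pi B \<longleftrightarrow>
     (\<forall>S\<in>B. \<exists>T\<in>B. S \<subseteq> T \<and> module.subspace smul T \<and> padic_complete smul pi T)"

definition born_torsionfree :: "('v::comm_ring_1 \<Rightarrow> 'd::ab_group_add \<Rightarrow> 'd) \<Rightarrow> 'v \<Rightarrow> 'd set set \<Rightarrow> bool" where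
  "born_torsionfree smul pi B \<longleftrightarrow> (\<forall>a x. a \<noteq> 0 \<longrightarrow> smul a x = 0 \<longrightarrow> x = 0) \<and>
     (\<forall>S\<in>B. {x. smul pi x \<in> S} \<in> B)"

definition born_algebra :: "('v::comm_ring_1 \<Rightarrow> 'd::ring \<Rightarrow> 'd) \<Rightarrow> 'd set set \<Rightarrow> bool" where
  "born_algebra smul B \<longleftrightarrow> born_module smul B \<and>
     (\<forall>a x y. smul a (x * y) = smul a x * y \<and> smul a (x * y) = x * smul a y) \<and>
     (\<forall>S\<in>B. \<forall>T\<in>B. {s * t | s t. s \<in> S \<and> t \<in> T} \<in> B)"

fun setpow :: "'d::ring set \<Rightarrow> nat \<Rightarrow> 'd set" where
  "setpow S 0 = {}"
| "setpow S (Suc 0) = S"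
| "setpow S (Suc (Suc n)) = {x * y | x y. x \<in> setpow S (Suc n) \<and> y \<in> S}"

definition semidagger :: "('v::comm_ring_1 \<Rightarrow> 'd::ring \<Rightarrow> 'd) \<Rightarrow> 'v \<Rightarrow> 'd set set \<Rightarrow> bool" where
  "semidagger smul pi B \<longleftrightarrow>
     (\<forall>S\<in>B. module.span smul (\<Union>i. pmul smul pi i (setpow S (Suc i))) \<in> B)"

definition dagger_algebra :: "('v::comm_ring_1 \<Rightarrow> 'd::ring \<Rightarrow> 'd) \<Rightarrow> 'v \<Rightarrow> 'd set set \<Rightarrow> bool" where
  "dagger_algebra smul pi B \<longleftrightarrow> born_algebra smul B \<and> born_complete smul pi B \<and>
     born_torsionfree smul pi B \<and> semidagger smul pi B"

definition compactoid :: "('v::comm_ring_1 \<Rightarrow> 'd::ab_group_add \<Rightarrow> 'd) \<Rightarrow> 'v \<Rightarrow> 'd set set \<Rightarrow> 'd set \<Rightarrow> bool" where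
  "compactoid smul pi B S \<longleftrightarrow> (\<exists>T\<in>B. module.subspace smul T \<and> S \<subseteq> T \<and>
     (\<forall>n::nat. \<exists>F. finite F \<and> F \<subseteq> T \<and>
        S \<subseteq> {f + t | f t. f \<in> module.span smul F \<and> t \<in> pmul smul pi n T}))"

definition compactoid_bornology :: "('v::comm_ring_1 \<Rightarrow> 'd::ab_group_add \<Rightarrow> 'd) \<Rightarrow> 'v \<Rightarrow> 'd set set \<Rightarrow> 'd set set" where
  "compactoid_bornology smul pi B = {S. compactoid smul pi B S}"

end

theory Submission
  imports Defs "HOL-Library.Set_Algebras"
begin

text \<open>
  Stability under finite unions, spans and products is direct: the product of
  f + pi^n t and f' + pi^n t' is f f' + pi^n (t f' + f t' + pi^n t t').

  Completeness: inside a complete bounded submodule T' \<supseteq> T, the pi-adic closure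
  \<Inter>n (span S + pi^n T') is still compactoid in T', and it is complete, because if a
  Cauchy sequence x n has limit y in T', the normalised tails w n = (y - x n) / pi^n satisfy
  w n = c n + pi w (n + 1) with c n = (x (n + 1) - x n) / pi^n in the closure.

  Torsion-freeness: if pi S \<subseteq> span F + pi^(n+1) T, the submodule span F \<inter> pi U of the
  finitely generated module span F is finitely generated (a nonempty set of scalars always
  contains one of least valuation, which divides all others), say by pi H, and then
  {x. pi x \<in> S} \<subseteq> span H + pi^n U.

  Semidagger: if S \<subseteq> span F + pi^n T, then pi^i S^(i+1) \<subseteq> span (pi^i F^(i+1)) + pi^n Z,
  where Z is the bounded submodule generated by all pi^j (T \<union> T T)^(j+1). For i \<ge> 2 n the
  finite part pi^i F^(i+1) can be dropped, since T^(i+1) \<subseteq> (T \<union> T T)^(i div 2 + 1) gives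
  pi^i T^(i+1) \<subseteq> pi^n Z; so only the finitely many i < 2 n contribute generators.
\<close>

lemma ex_dvd_all:
  fixes pi :: "'a::comm_ring_1" and I :: "'a set"
  assumes unit_pow: "\<And>x. x \<noteq> 0 \<Longrightarrow> \<exists>u n. u dvd 1 \<and> x = u * pi ^ n"
    and "I \<noteq> {}"
  shows "\<exists>a\<in>I. \<forall>b\<in>I. a dvd b"
proof (cases "I \<subseteq> {0}")
  case True
  then show ?thesis using \<open>I \<noteq> {}\<close> by blast
next
  case False
  define P where "P k \<longleftrightarrow> (\<exists>a\<in>I. \<exists>u. u dvd 1 \<and> a = u * pi ^ k)" for k
  obtain a where "a \<in> I" "a \<noteq> 0" using False by blast
  moreover obtain u n where "u dvd 1" "a = u * pi ^ n" using unit_pow[OF \<open>a \<noteq> 0\<close>] by blast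
  ultimately have "\<exists>k. P k" unfolding P_def by blast
  define k0 where "k0 = (LEAST k. P k)"
  have "P k0" unfolding k0_def using \<open>\<exists>k. P k\<close> by (rule LeastI_ex)
  then obtain a0 u0 where a0: "a0 \<in> I" "u0 dvd 1" "a0 = u0 * pi ^ k0"
    unfolding P_def by blast
  obtain v where "1 = u0 * v" using a0(2) by (rule dvdE)
  have "a0 * v = (u0 * v) * pi ^ k0" using a0(3) by (simp add: ac_simps)
  also have "\<dots> = pi ^ k0" using \<open>1 = u0 * v\<close> by simp
  finally have a0_dvd: "a0 dvd pi ^ k0" by (metis dvd_triv_left)
  have "a0 dvd b" if "b \<in> I" for b
  proof (cases "b = 0")
    case False
    then obtain u k where "u dvd 1" "b = u * pi ^ k" using unit_pow[OF False] by blast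
    then have "P k" and "pi ^ k dvd b" using \<open>b \<in> I\<close> unfolding P_def by auto
    then have "k0 \<le> k" unfolding k0_def by (intro Least_le)
    then have "pi ^ k0 dvd pi ^ k" by (rule le_imp_power_dvd)
    with a0_dvd show ?thesis using \<open>pi ^ k dvd b\<close> by (metis dvd_trans)
  qed simp
  then show ?thesis using a0(1) by blast
qed

lemma setpow_Suc_Suc: "setpow S (Suc (Suc n)) = setpow S (Suc n) * S"
  by (auto simp: set_times_def)

declare setpow.simps(3)[simp del]

lemma setpow_mono: "A \<subseteq> A' \<Longrightarrow> setpow A n \<subseteq> setpow A' n"
  by (induction A n rule: setpow.induct) (simp_all add: setpow_Suc_Suc set_times_mono2)

lemma finite_setpow: "finite A \<Longrightarrow> finite (setpow A n)"
  by (induction A n rule: setpow.induct) (simp_all add: setpow_Suc_Suc finite_set_times)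

lemma setpow_subset_setpow_square:
  "setpow T (Suc k) \<subseteq> setpow (T \<union> T * T) (Suc (k div 2))"
proof (induction k rule: nat_induct2)
  case (step k)
  have "setpow T (Suc (k + 2)) = setpow T (Suc k) * (T * T)"
    by (simp add: setpow_Suc_Suc mult.assoc)
  also have "\<dots> \<subseteq> setpow (T \<union> T * T) (Suc (k div 2)) * (T \<union> T * T)"
    using step.IH by (intro set_times_mono2) auto
  also have "\<dots> = setpow (T \<union> T * T) (Suc ((k + 2) div 2))"
    by (simp add: setpow_Suc_Suc)
  finally show ?case .
qed (auto simp: numeral_2_eq_2 setpow_Suc_Suc)

lemma set_times_eq_setcompr: "S * T = {s * t | s t. s \<in> S \<and> t \<in> T}"
  by (auto simp: set_times_def)

lemma pmul_mono: "A \<subseteq> C \<Longrightarrow> pmul smul pi n A \<subseteq> pmul smul pi n C"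
  unfolding pmul_def by (rule image_mono)

context module
begin

lemma pmul_0 [simp]: "pmul scale pi 0 T = T"
  by (simp add: pmul_def)

lemma pmul_add: "pmul scale pi (m + n) X = pmul scale pi m (pmul scale pi n X)"
  unfolding pmul_def by (simp add: image_image power_add)

lemma pmul_subset: "subspace T \<Longrightarrow> pmul scale pi n T \<subseteq> T"
  unfolding pmul_def using subspace_scale by blast

lemma subspace_pmul: "subspace T \<Longrightarrow> subspace (pmul scale pi n T)"
  unfolding pmul_def by (rule module_hom.subspace_image[OF module_hom_scale_self])

lemma span_pmul: "span (pmul scale pi n X) = pmul scale pi n (span X)"
  unfolding pmul_def by (rule module_hom.span_image[OF module_hom_scale_self])

lemma set_plus_pmulI: "a \<in> A \<Longrightarrow> t \<in> T \<Longrightarrow> a + pi ^ n *s t \<in> A + pmul scale pi n T"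
  unfolding pmul_def by (intro set_plus_intro imageI)

lemma set_plus_pmulE:
  assumes "x \<in> A + pmul scale pi n T"
  obtains a t where "a \<in> A" "t \<in> T" "x = a + pi ^ n *s t"
  using assms unfolding set_plus_def pmul_def by blast

lemma pmul_set_plus: "pmul scale pi n (A + C) \<subseteq> pmul scale pi n A + pmul scale pi n C"
proof
  fix x assume "x \<in> pmul scale pi n (A + C)"
  then obtain y where "y \<in> A + C" "x = pi ^ n *s y" by (auto simp: pmul_def)
  then obtain a c where "a \<in> A" "c \<in> C" "x = pi ^ n *s a + pi ^ n *s c"
    by (auto simp: scale_right_distrib elim: set_plus_elim)
  then show "x \<in> pmul scale pi n A + pmul scale pi n C" by (auto simp: pmul_def)
qed

lemma subspace_set_plus:
  assumes "subspace A" "subspace C"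
  shows "subspace (A + C)"
proof -
  have "span A = A" "span C = C" using assms by simp_all
  then have "A + C = span (A \<union> C)" by (simp only: span_Un set_plus_def) blast
  then show ?thesis by simp
qed

lemma set_plus_subset_subspace: "subspace W \<Longrightarrow> A \<subseteq> W \<Longrightarrow> C \<subseteq> W \<Longrightarrow> A + C \<subseteq> W"
  by (auto simp: set_plus_def subspace_add subsetD)

lemma subset_plus_subspace: "subspace P \<Longrightarrow> A \<subseteq> A + P"
  using set_zero_plus2[of P A] subspace_0 by (simp add: add.commute)

lemma set_plus_subspace_self: "subspace P \<Longrightarrow> P + P = P"
  using set_plus_subset_subspace[of P P P] subset_plus_subspace[of P P] by blast

lemma set_plus_pmul_idem:
  "subspace T \<Longrightarrow> A + pmul scale pi n T + pmul scale pi n T = A + pmul scale pi n T"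
  by (simp add: add.assoc set_plus_subspace_self subspace_pmul)

lemma inj_scale_power: "inj (scale pi) \<Longrightarrow> inj (scale (pi ^ n))"
proof (induction n)
  case (Suc n)
  then have "inj (scale pi \<circ> scale (pi ^ n))" by (simp add: inj_compose)
  then show ?case by (simp add: comp_def)
qed (simp add: inj_on_def)

lemma finitely_generated_subspace:
  fixes pi :: 'a
  assumes unit_pow: "\<And>x. x \<noteq> 0 \<Longrightarrow> \<exists>u n. u dvd 1 \<and> x = u * pi ^ n"
    and "finite F" "subspace N" "N \<subseteq> span F"
  shows "\<exists>G. finite G \<and> G \<subseteq> N \<and> N \<subseteq> span G"
  using assms(2-4)
proof (induction F arbitrary: N rule: finite_induct)
  case empty
  then show ?case by (intro exI[of _ "{}"]) auto
next
  case (insert f F)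
  obtain G' where G': "finite G'" "G' \<subseteq> N \<inter> span F" "N \<inter> span F \<subseteq> span G'"
    using insert.IH[of "N \<inter> span F"] insert.prems(1) subspace_inter by blast
  define I where "I = {a. \<exists>y\<in>span F. a *s f + y \<in> N}"
  have coeff: "\<exists>k\<in>I. z - k *s f \<in> span F" if "z \<in> N" for z
  proof -
    have "z \<in> span (insert f F)" using that insert.prems(2) by blast
    then obtain k where "z - k *s f \<in> span F" unfolding span_breakdown_eq by blast
    moreover have "k \<in> I" unfolding I_def using that calculation by force
    ultimately show ?thesis by blast
  qed
  have "0 \<in> I" unfolding I_def using insert.prems(1) subspace_0 span_zero by force
  then have "\<exists>a\<in>I. \<forall>k\<in>I. a dvd k" using unit_pow by (intro ex_dvd_all) auto
  then obtain a0 where "a0 \<in> I" and a0_dvd: "\<And>k. k \<in> I \<Longrightarrow> a0 dvd k" by blast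
  then obtain y0 where y0: "y0 \<in> span F" "a0 *s f + y0 \<in> N" unfolding I_def by blast
  define z0 where "z0 = a0 *s f + y0"
  have "z0 \<in> N" unfolding z0_def by (rule y0(2))
  have "N \<subseteq> span (insert z0 G')"
  proof
    fix z assume "z \<in> N"
    then obtain k where "k \<in> I" "z - k *s f \<in> span F" using coeff by blast
    then obtain c where "k = a0 * c" using a0_dvd by blast
    then have "z - c *s z0 = (z - k *s f) - c *s y0" by (simp add: z0_def algebra_simps)
    moreover have "(z - k *s f) - c *s y0 \<in> span F"
      using \<open>z - k *s f \<in> span F\<close> span_scale[OF y0(1)] by (rule span_diff)
    ultimately have "z - c *s z0 \<in> span F" by (simp only:)
    moreover have "z - c *s z0 \<in> N"
      using \<open>z \<in> N\<close> \<open>z0 \<in> N\<close> insert.prems(1) by (intro subspace_diff subspace_scale)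
    ultimately have "z - c *s z0 \<in> span (insert z0 G')" using G'(3) span_mono[of G'] by blast
    moreover have "c *s z0 \<in> span (insert z0 G')" by (intro span_scale span_base) simp
    ultimately have "(z - c *s z0) + c *s z0 \<in> span (insert z0 G')" by (rule span_add)
    then show "z \<in> span (insert z0 G')" by simp
  qed
  then show ?case using G' \<open>z0 \<in> N\<close> by (intro exI[of _ "insert z0 G'"]) auto
qed

definition compactoid_in :: "'a \<Rightarrow> 'b set \<Rightarrow> 'b set \<Rightarrow> bool" where
  "compactoid_in pi T S \<longleftrightarrow> S \<subseteq> T \<and>
     (\<forall>n. \<exists>F. finite F \<and> F \<subseteq> T \<and> S \<subseteq> span F + pmul scale pi n T)"

lemma compactoid_iff: "compactoid scale pi B S \<longleftrightarrow> (\<exists>T\<in>B. subspace T \<and> compactoid_in pi T S)"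
proof -
  have "{f + t | f t. f \<in> X \<and> t \<in> Y} = X + Y" for X Y :: "'b set"
    by (auto simp: set_plus_def)
  then show ?thesis unfolding compactoid_def compactoid_in_def by simp
qed

lemma compactoid_in_subset: "compactoid_in pi T S \<Longrightarrow> S' \<subseteq> S \<Longrightarrow> compactoid_in pi T S'"
  unfolding compactoid_in_def by (meson order_trans)

lemma compactoid_in_mono:
  assumes "compactoid_in pi T S" "T \<subseteq> T'"
  shows "compactoid_in pi T' S"
  unfolding compactoid_in_def
proof (intro conjI allI)
  show "S \<subseteq> T'" using assms unfolding compactoid_in_def by blast
  fix n
  obtain F where "finite F" "F \<subseteq> T" "S \<subseteq> span F + pmul scale pi n T"
    using assms(1) unfolding compactoid_in_def by blast
  moreover have "span F + pmul scale pi n T \<subseteq> span F + pmul scale pi n T'"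
    using assms(2) by (intro set_plus_mono2 pmul_mono) auto
  ultimately show "\<exists>F. finite F \<and> F \<subseteq> T' \<and> S \<subseteq> span F + pmul scale pi n T'"
    using assms(2) by blast
qed

lemma compactoid_in_finite:
  assumes "finite F" "F \<subseteq> T" "subspace T"
  shows "compactoid_in pi T F"
proof -
  have "F \<subseteq> span F + pmul scale pi n T" for n
    using span_superset subset_plus_subspace[OF subspace_pmul[OF assms(3)]] by blast
  then show ?thesis unfolding compactoid_in_def using assms by blast
qed

lemma compactoid_in_Un:
  assumes "compactoid_in pi T S1" "compactoid_in pi T S2"
  shows "compactoid_in pi T (S1 \<union> S2)"
  unfolding compactoid_in_def
proof (intro conjI allI)
  show "S1 \<union> S2 \<subseteq> T" using assms unfolding compactoid_in_def by blast
  fix n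
  obtain F1 where "finite F1" "F1 \<subseteq> T" "S1 \<subseteq> span F1 + pmul scale pi n T"
    using assms(1) unfolding compactoid_in_def by blast
  moreover obtain F2 where "finite F2" "F2 \<subseteq> T" "S2 \<subseteq> span F2 + pmul scale pi n T"
    using assms(2) unfolding compactoid_in_def by blast
  moreover have "span Fi + pmul scale pi n T \<subseteq> span (F1 \<union> F2) + pmul scale pi n T"
    if "Fi \<subseteq> F1 \<union> F2" for Fi
    using that by (intro set_plus_mono2 span_mono) auto
  ultimately show "\<exists>F. finite F \<and> F \<subseteq> T \<and> S1 \<union> S2 \<subseteq> span F + pmul scale pi n T"
    by (intro exI[of _ "F1 \<union> F2"]) blast
qed

lemma compactoid_in_span:
  assumes "compactoid_in pi T S" "subspace T"
  shows "compactoid_in pi T (span S)"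
  unfolding compactoid_in_def
proof (intro conjI allI)
  show "span S \<subseteq> T" using assms by (intro span_minimal) (auto simp: compactoid_in_def)
  fix n
  obtain F where F: "finite F" "F \<subseteq> T" "S \<subseteq> span F + pmul scale pi n T"
    using assms(1) unfolding compactoid_in_def by blast
  have "subspace (span F + pmul scale pi n T)"
    using assms(2) by (intro subspace_set_plus subspace_pmul) auto
  with F(3) have "span S \<subseteq> span F + pmul scale pi n T" by (rule span_minimal)
  with F(1,2) show "\<exists>F. finite F \<and> F \<subseteq> T \<and> span S \<subseteq> span F + pmul scale pi n T" by blast
qed

lemma compactoid_in_vimage_scale:
  fixes pi :: 'a
  assumes unit_pow: "\<And>x. x \<noteq> 0 \<Longrightarrow> \<exists>u n. u dvd 1 \<and> x = u * pi ^ n"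
    and inj: "inj (scale pi)" and S: "compactoid_in pi T S"
    and U: "subspace U" "T \<subseteq> U" "{x. pi *s x \<in> T} \<subseteq> U"
  shows "compactoid_in pi U {x. pi *s x \<in> S}"
  unfolding compactoid_in_def
proof (intro conjI allI)
  show "{x. pi *s x \<in> S} \<subseteq> U" using S U(3) unfolding compactoid_in_def by blast
  fix n
  obtain F where F: "finite F" "F \<subseteq> T" "S \<subseteq> span F + pmul scale pi (Suc n) T"
    using S unfolding compactoid_in_def by blast
  define N where "N = span F \<inter> scale pi ` U"
  have "subspace N"
    unfolding N_def using U(1) module_hom.subspace_image[OF module_hom_scale_self]
    by (intro subspace_inter subspace_span) auto
  moreover have "N \<subseteq> span F" unfolding N_def by blast
  ultimately have "\<exists>G. finite G \<and> G \<subseteq> N \<and> N \<subseteq> span G"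
    using unit_pow F(1) by (intro finitely_generated_subspace) auto
  then obtain G where G: "finite G" "G \<subseteq> scale pi ` U" "N \<subseteq> span G"
    unfolding N_def by blast
  then obtain H where H: "H \<subseteq> U" "finite H" "G = scale pi ` H"
    by (meson finite_subset_image)
  have "x \<in> span H + pmul scale pi n U" if "pi *s x \<in> S" for x
  proof -
    obtain f t where ft: "f \<in> span F" "t \<in> T" "pi *s x = f + pi ^ Suc n *s t"
      using subsetD[OF F(3) \<open>pi *s x \<in> S\<close>] by (rule set_plus_pmulE)
    define u where "u = x - pi ^ n *s t"
    have "x \<in> U" using that S U(3) unfolding compactoid_in_def by blast
    then have "u \<in> U" unfolding u_def using ft(2) U by (intro subspace_diff subspace_scale) auto
    have "pi *s u = f" unfolding u_def using ft(3) by (simp add: scale_right_diff_distrib)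
    then have "pi *s u \<in> span G" using ft(1) \<open>u \<in> U\<close> G(3) unfolding N_def by blast
    also have "span G = scale pi ` span H"
      unfolding H(3) by (rule module_hom.span_image[OF module_hom_scale_self])
    finally obtain h where "h \<in> span H" "pi *s u = pi *s h" by blast
    then have "x = h + pi ^ n *s t" using injD[OF inj] unfolding u_def by (simp add: algebra_simps)
    then show ?thesis using set_plus_pmulI[OF \<open>h \<in> span H\<close>] ft(2) U(2) by blast
  qed
  then show "\<exists>F. finite F \<and> F \<subseteq> U \<and> {x. pi *s x \<in> S} \<subseteq> span F + pmul scale pi n U"
    using H(1,2) by blast
qed

definition padic_closure :: "'a \<Rightarrow> 'b set \<Rightarrow> 'b set \<Rightarrow> 'b set" where
  "padic_closure pi T M = (\<Inter>n. M + pmul scale pi n T)"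

lemma padic_closure_subset: "padic_closure pi T M \<subseteq> M + pmul scale pi n T"
  unfolding padic_closure_def by blast

lemma subset_padic_closure: "subspace T \<Longrightarrow> M \<subseteq> padic_closure pi T M"
  unfolding padic_closure_def by (intro INT_greatest subset_plus_subspace subspace_pmul)

lemma subspace_padic_closure: "subspace M \<Longrightarrow> subspace T \<Longrightarrow> subspace (padic_closure pi T M)"
  unfolding padic_closure_def by (intro subspace_Int subspace_set_plus subspace_pmul)

lemma padic_closure_subset_ambient: "subspace T \<Longrightarrow> M \<subseteq> T \<Longrightarrow> padic_closure pi T M \<subseteq> T"
  using padic_closure_subset[of pi T M 0] set_plus_subset_subspace[of T M T] by simp

lemma padic_closure_plus_pmul_subset:
  "subspace T \<Longrightarrow> padic_closure pi T M + pmul scale pi n T \<subseteq> M + pmul scale pi n T"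
  using set_plus_mono2[OF padic_closure_subset order_refl] set_plus_pmul_idem by metis

lemma compactoid_in_padic_closure:
  assumes "compactoid_in pi T M" "subspace T"
  shows "compactoid_in pi T (padic_closure pi T M)"
  unfolding compactoid_in_def
proof (intro conjI allI)
  show "padic_closure pi T M \<subseteq> T"
    using assms by (intro padic_closure_subset_ambient) (auto simp: compactoid_in_def)
  fix n
  obtain F where F: "finite F" "F \<subseteq> T" "M \<subseteq> span F + pmul scale pi n T"
    using assms(1) unfolding compactoid_in_def by blast
  have "padic_closure pi T M \<subseteq> span F + pmul scale pi n T + pmul scale pi n T"
    using padic_closure_subset F(3) by (meson order_trans set_plus_mono2 order_refl)
  also have "\<dots> = span F + pmul scale pi n T" using assms(2) by (rule set_plus_pmul_idem)
  finally show "\<exists>F. finite F \<and> F \<subseteq> T \<and> padic_closure pi T M \<subseteq> span F + pmul scale pi n T"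
    using F(1,2) by blast
qed

lemma tail_mem_set_plus_pmul:
  assumes "subspace C" "\<And>n. c n \<in> C" "\<And>n. w n \<in> T" "\<And>n. w n = c n + pi *s w (Suc n)"
  shows "w n \<in> C + pmul scale pi k T"
proof (induction k arbitrary: n)
  case 0
  show ?case using set_plus_intro[OF subspace_0[OF assms(1)] assms(3)] by simp
next
  case (Suc k)
  obtain c' t where "c' \<in> C" "t \<in> T" "w (Suc n) = c' + pi ^ k *s t"
    using Suc.IH[of "Suc n"] by (rule set_plus_pmulE)
  then have "w n = (c n + pi *s c') + pi ^ Suc k *s t"
    using assms(4)[of n] by (simp add: scale_right_distrib add.assoc)
  moreover have "c n + pi *s c' \<in> C"
    using assms(1,2) \<open>c' \<in> C\<close> by (intro subspace_add subspace_scale)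
  ultimately show ?case using set_plus_pmulI \<open>t \<in> T\<close> by metis
qed

lemma padic_complete_padic_closure:
  assumes inj: "inj (scale pi)" and T: "subspace T" "padic_complete scale pi T"
    and M: "subspace M" "M \<subseteq> T"
  shows "padic_complete scale pi (padic_closure pi T M)"
proof -
  let ?C = "padic_closure pi T M"
  have C: "subspace ?C" using M(1) T(1) by (rule subspace_padic_closure)
  have CT: "?C \<subseteq> T" using T(1) M(2) by (rule padic_closure_subset_ambient)
  show ?thesis
    unfolding padic_complete_def
  proof (intro conjI allI impI)
    have "(\<Inter>n. pmul scale pi n T) \<subseteq> {0}"
      using T(2) unfolding padic_complete_def by (rule conjunct1)
    moreover have "pmul scale pi n ?C \<subseteq> pmul scale pi n T" for n
      using CT by (rule pmul_mono)
    ultimately show "(\<Inter>n. pmul scale pi n ?C) \<subseteq> {0}" by blast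
  next
    fix x :: "nat \<Rightarrow> 'b"
    assume x: "(\<forall>n. x n \<in> ?C) \<and> (\<forall>n. x (Suc n) - x n \<in> pmul scale pi n ?C)"
    then have "\<forall>n. \<exists>d\<in>?C. x (Suc n) - x n = pi ^ n *s d" unfolding pmul_def by blast
    then obtain c where c: "\<And>n. c n \<in> ?C" "\<And>n. x (Suc n) - x n = pi ^ n *s c n" by metis
    have "\<forall>n. x n \<in> T" and "\<forall>n. x (Suc n) - x n \<in> pmul scale pi n T"
      using x CT c unfolding pmul_def by blast+
    then have "\<exists>y\<in>T. \<forall>n. y - x n \<in> pmul scale pi n T"
      using T(2) unfolding padic_complete_def by blast
    then obtain y where "\<forall>n. \<exists>t\<in>T. y - x n = pi ^ n *s t" unfolding pmul_def by blast
    then obtain w where w: "\<And>n. w n \<in> T" "\<And>n. y - x n = pi ^ n *s w n" by metis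
    have w_rec: "w n = c n + pi *s w (Suc n)" for n
    proof (rule injD[OF inj_scale_power[OF inj, of n]])
      have "pi ^ n *s w n = (y - x (Suc n)) + (x (Suc n) - x n)" unfolding w(2)[symmetric] by simp
      also have "\<dots> = pi ^ n *s (c n + pi *s w (Suc n))"
        by (simp add: w(2) c(2) scale_right_distrib add.commute mult.commute)
      finally show "pi ^ n *s w n = pi ^ n *s (c n + pi *s w (Suc n))" .
    qed
    have "w n \<in> ?C + pmul scale pi k T" for k n
      using C c(1) w(1) w_rec by (rule tail_mem_set_plus_pmul)
    then have "w n \<in> M + pmul scale pi k T" for k n
      using padic_closure_plus_pmul_subset[OF T(1)] by blast
    then have wC: "w n \<in> ?C" for n unfolding padic_closure_def by blast
    have "y = x 0 + w 0" using w(2)[of 0] by (simp add: algebra_simps)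
    then have "y \<in> ?C" using x wC C by (simp add: subspace_add)
    moreover have "y - x n \<in> pmul scale pi n ?C" for n
      using w(2) wC unfolding pmul_def by blast
    ultimately show "\<exists>y\<in>?C. \<forall>n. y - x n \<in> pmul scale pi n ?C" by blast
  qed
qed

end

locale module_algebra = module smul for smul :: "'a::comm_ring_1 \<Rightarrow> 'b::ring \<Rightarrow> 'b" +
  assumes mult_scale_left: "smul a x * y = smul a (x * y)"
    and mult_scale_right: "x * smul a y = smul a (x * y)"
begin

lemma span_times_span: "span X * span Y \<subseteq> span (X * Y)"
proof -
  have hom_left: "module_hom smul smul (\<lambda>y. x * y)" for x
    by (simp add: module_hom_iff module_axioms distrib_left mult_scale_right)
  have hom_right: "module_hom smul smul (\<lambda>x. x * y)" for y
    by (simp add: module_hom_iff module_axioms distrib_right mult_scale_left)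
  have "(\<lambda>y. x * y) ` span Y \<subseteq> span (X * Y)" if "x \<in> X" for x
    using that by (auto simp flip: module_hom.span_image[OF hom_left] intro!: span_mono)
  then have "X * span Y \<subseteq> span (X * Y)" by (auto simp: set_times_def)
  then have "span (X * span Y) \<subseteq> span (X * Y)" by (simp add: span_minimal)
  moreover have "(\<lambda>x. x * y) ` span X \<subseteq> span (X * span Y)" if "y \<in> span Y" for y
    using that by (auto simp flip: module_hom.span_image[OF hom_right] intro!: span_mono)
  ultimately show ?thesis by (auto simp: set_times_def)
qed

lemma times_subset_span_plus_pmul:
  assumes "S1 \<subseteq> span F1 + pmul smul pi n T1" "F1 \<subseteq> T1"
    and "S2 \<subseteq> span F2 + pmul smul pi n T2" "F2 \<subseteq> T2"
  shows "S1 * S2 \<subseteq> span (F1 * F2) + pmul smul pi n (span (T1 * T2))"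
proof
  fix x assume "x \<in> S1 * S2"
  then obtain s1 s2 where x: "x = s1 * s2" and "s1 \<in> S1" "s2 \<in> S2" by (rule set_times_elim)
  obtain f t where "f \<in> span F1" "t \<in> T1" and s1: "s1 = f + smul (pi ^ n) t"
    using subsetD[OF assms(1) \<open>s1 \<in> S1\<close>] by (rule set_plus_pmulE)
  obtain f' t' where "f' \<in> span F2" "t' \<in> T2" and s2: "s2 = f' + smul (pi ^ n) t'"
    using subsetD[OF assms(3) \<open>s2 \<in> S2\<close>] by (rule set_plus_pmulE)
  have "span F1 \<subseteq> span T1" "span F2 \<subseteq> span T2" using assms(2,4) by (simp_all add: span_mono)
  then have "f \<in> span T1" "f' \<in> span T2" "t \<in> span T1" "t' \<in> span T2"
    using \<open>f \<in> span F1\<close> \<open>f' \<in> span F2\<close> \<open>t \<in> T1\<close> \<open>t' \<in> T2\<close> span_base by auto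
  then have "t * f' + f * t' + smul (pi ^ n) (t * t') \<in> span (T1 * T2)"
    using span_times_span by (intro span_add span_scale) auto
  moreover have "f * f' \<in> span (F1 * F2)"
    using span_times_span \<open>f \<in> span F1\<close> \<open>f' \<in> span F2\<close> by auto
  moreover have "x = f * f' + smul (pi ^ n) (t * f' + f * t' + smul (pi ^ n) (t * t'))"
    unfolding x s1 s2 by (simp add: algebra_simps mult_scale_left mult_scale_right)
  ultimately show "x \<in> span (F1 * F2) + pmul smul pi n (span (T1 * T2))"
    unfolding pmul_def by blast
qed

lemma setpow_subset_span_plus_pmul:
  assumes "S \<subseteq> span F + pmul smul pi n T" "F \<subseteq> T"
  shows "setpow S (Suc k) \<subseteq> span (setpow F (Suc k)) + pmul smul pi n (span (setpow T (Suc k)))"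
proof (induction k)
  case 0
  have "span F + pmul smul pi n T \<subseteq> span F + pmul smul pi n (span T)"
    by (intro set_plus_mono2 pmul_mono span_superset order_refl)
  with assms(1) show ?case by simp
next
  case (Suc k)
  have "setpow F (Suc k) \<subseteq> span (setpow T (Suc k))"
    using setpow_mono[OF assms(2)] span_superset by blast
  with Suc.IH assms have "setpow S (Suc k) * S \<subseteq>
      span (setpow F (Suc k) * F) + pmul smul pi n (span (span (setpow T (Suc k)) * T))"
    by (intro times_subset_span_plus_pmul)
  also have "span (span (setpow T (Suc k)) * T) \<subseteq> span (setpow T (Suc k) * T)"
    using span_times_span[of "setpow T (Suc k)" T] set_times_mono2[OF order_refl span_superset]
    by (intro span_minimal) auto
  then have "span (setpow F (Suc k) * F) + pmul smul pi n (span (span (setpow T (Suc k)) * T))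
      \<subseteq> span (setpow F (Suc k) * F) + pmul smul pi n (span (setpow T (Suc k) * T))"
    by (intro set_plus_mono2 pmul_mono order_refl)
  finally show ?case by (simp add: setpow_Suc_Suc)
qed

lemma compactoid_in_times:
  assumes S1: "compactoid_in pi T1 S1" and S2: "compactoid_in pi T2 S2"
    and Z: "subspace Z" "T1 * T2 \<subseteq> Z"
  shows "compactoid_in pi Z (S1 * S2)"
  unfolding compactoid_in_def
proof (intro conjI allI)
  have "S1 * S2 \<subseteq> T1 * T2" using S1 S2 unfolding compactoid_in_def by (intro set_times_mono2) auto
  then show "S1 * S2 \<subseteq> Z" using Z(2) by (rule order_trans)
  fix n
  obtain F1 where F1: "finite F1" "F1 \<subseteq> T1" "S1 \<subseteq> span F1 + pmul smul pi n T1"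
    using S1 unfolding compactoid_in_def by blast
  obtain F2 where F2: "finite F2" "F2 \<subseteq> T2" "S2 \<subseteq> span F2 + pmul smul pi n T2"
    using S2 unfolding compactoid_in_def by blast
  have "S1 * S2 \<subseteq> span (F1 * F2) + pmul smul pi n (span (T1 * T2))"
    using F1 F2 by (intro times_subset_span_plus_pmul)
  also have "\<dots> \<subseteq> span (F1 * F2) + pmul smul pi n Z"
    using span_minimal[OF Z(2,1)] by (intro set_plus_mono2 pmul_mono order_refl)
  finally have "S1 * S2 \<subseteq> span (F1 * F2) + pmul smul pi n Z" .
  moreover have "F1 * F2 \<subseteq> Z" using F1(2) F2(2) Z(2) set_times_mono2 by blast
  moreover have "finite (F1 * F2)" using F1(1) F2(1) by (rule finite_set_times)
  ultimately show "\<exists>F. finite F \<and> F \<subseteq> Z \<and> S1 * S2 \<subseteq> span F + pmul smul pi n Z" by blast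
qed

lemma pmul_setpow_subset_pmul:
  assumes Z: "subspace Z" and TZ: "\<And>j. pmul smul pi j (setpow (T \<union> T * T) (Suc j)) \<subseteq> Z"
    and "2 * n \<le> i"
  shows "pmul smul pi i (setpow T (Suc i)) \<subseteq> pmul smul pi n Z"
proof -
  let ?h = "i div 2"
  have "i = n + ((i - n - ?h) + ?h)" using \<open>2 * n \<le> i\<close> by linarith
  then have "pmul smul pi i (setpow T (Suc i))
      = pmul smul pi n (pmul smul pi (i - n - ?h) (pmul smul pi ?h (setpow T (Suc i))))"
    by (metis pmul_add)
  also have "\<dots> \<subseteq> pmul smul pi n (pmul smul pi (i - n - ?h) Z)"
    using pmul_mono[OF setpow_subset_setpow_square[of T i], of smul pi ?h] TZ[of ?h]
    by (intro pmul_mono) (rule order_trans)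
  also have "\<dots> \<subseteq> pmul smul pi n Z" using Z by (intro pmul_mono pmul_subset)
  finally show ?thesis .
qed

lemma UN_pmul_setpow_subset:
  assumes F: "S \<subseteq> span F + pmul smul pi n T" "F \<subseteq> T"
    and Z: "subspace Z" and TZ: "\<And>j. pmul smul pi j (setpow (T \<union> T * T) (Suc j)) \<subseteq> Z"
  shows "(\<Union>i. pmul smul pi i (setpow S (Suc i)))
    \<subseteq> span (\<Union>i<2 * n. pmul smul pi i (setpow F (Suc i))) + pmul smul pi n Z"
    (is "_ \<subseteq> ?W")
proof -
  have W: "subspace ?W" using Z by (intro subspace_set_plus subspace_pmul subspace_span)
  have ZW: "pmul smul pi n Z \<subseteq> ?W" by (subst add.commute) (rule subset_plus_subspace[OF subspace_span])
  have TZ': "pmul smul pi i (setpow T (Suc i)) \<subseteq> Z" for i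
    using pmul_mono[OF setpow_mono[of T "T \<union> T * T"]] TZ by blast
  have FW: "pmul smul pi i (setpow F (Suc i)) \<subseteq> ?W" for i
  proof (cases "i < 2 * n")
    case True
    then have "pmul smul pi i (setpow F (Suc i)) \<subseteq> (\<Union>i<2 * n. pmul smul pi i (setpow F (Suc i)))"
      by blast
    also have "\<dots> \<subseteq> ?W" using span_superset subset_plus_subspace[OF subspace_pmul[OF Z]]
      by (rule order_trans)
    finally show ?thesis .
  next
    case False
    have "pmul smul pi i (setpow F (Suc i)) \<subseteq> pmul smul pi i (setpow T (Suc i))"
      using F(2) by (intro pmul_mono setpow_mono)
    also have "\<dots> \<subseteq> pmul smul pi n Z" using Z TZ False by (intro pmul_setpow_subset_pmul) auto
    finally show ?thesis using ZW by (rule order_trans)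
  qed
  have "pmul smul pi i (setpow S (Suc i)) \<subseteq> ?W" for i
  proof -
    have "pmul smul pi i (setpow S (Suc i)) \<subseteq>
        pmul smul pi i (span (setpow F (Suc i))) + pmul smul pi i (pmul smul pi n (span (setpow T (Suc i))))"
      using setpow_subset_span_plus_pmul[OF F] pmul_set_plus by (meson pmul_mono order_trans)
    also have "\<dots> \<subseteq> ?W + ?W"
    proof (intro set_plus_mono2)
      show "pmul smul pi i (span (setpow F (Suc i))) \<subseteq> ?W"
        unfolding span_pmul[symmetric] using FW W by (rule span_minimal)
      have "pmul smul pi i (pmul smul pi n (span (setpow T (Suc i))))
          = pmul smul pi n (span (pmul smul pi i (setpow T (Suc i))))"
        by (simp add: span_pmul flip: pmul_add add.commute)
      also have "\<dots> \<subseteq> pmul smul pi n Z" using span_minimal[OF TZ' Z] by (rule pmul_mono)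
      finally show "pmul smul pi i (pmul smul pi n (span (setpow T (Suc i)))) \<subseteq> ?W"
        using ZW by blast
    qed
    also have "\<dots> = ?W" using W by (rule set_plus_subspace_self)
    finally show ?thesis .
  qed
  then show ?thesis by blast
qed

lemma compactoid_in_UN_pmul_setpow:
  assumes S: "compactoid_in pi T S" and Z: "subspace Z"
    and TZ: "\<And>j. pmul smul pi j (setpow (T \<union> T * T) (Suc j)) \<subseteq> Z"
  shows "compactoid_in pi Z (\<Union>i. pmul smul pi i (setpow S (Suc i)))"
  unfolding compactoid_in_def
proof (intro conjI allI)
  have TZ': "pmul smul pi i (setpow T (Suc i)) \<subseteq> Z" for i
    using pmul_mono[OF setpow_mono[of T "T \<union> T * T"]] TZ by blast
  have "S \<subseteq> T" using S unfolding compactoid_in_def by blast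
  then have "pmul smul pi i (setpow S (Suc i)) \<subseteq> Z" for i
    using TZ'[of i] by (meson pmul_mono setpow_mono order_trans)
  then show "(\<Union>i. pmul smul pi i (setpow S (Suc i))) \<subseteq> Z" by blast
  fix n
  obtain F where F: "finite F" "F \<subseteq> T" "S \<subseteq> span F + pmul smul pi n T"
    using S unfolding compactoid_in_def by blast
  let ?G = "\<Union>i<2 * n. pmul smul pi i (setpow F (Suc i))"
  have "finite ?G" unfolding pmul_def using F(1) by (simp add: finite_setpow)
  moreover have "pmul smul pi i (setpow F (Suc i)) \<subseteq> Z" for i
    using F(2) TZ'[of i] by (meson pmul_mono setpow_mono order_trans)
  then have "?G \<subseteq> Z" by blast
  moreover have "(\<Union>i. pmul smul pi i (setpow S (Suc i))) \<subseteq> span ?G + pmul smul pi n Z"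
    using F(3,2) Z TZ by (rule UN_pmul_setpow_subset)
  ultimately show "\<exists>G. finite G \<and> G \<subseteq> Z \<and>
      (\<Union>i. pmul smul pi i (setpow S (Suc i))) \<subseteq> span G + pmul smul pi n Z" by blast
qed

end

locale bornological_module =
  fixes smul :: "'a::comm_ring_1 \<Rightarrow> 'b::ab_group_add \<Rightarrow> 'b" and B :: "'b set set"
  assumes born_module: "born_module smul B"
begin

sublocale module smul
  using born_module by (simp add: born_module_def)

lemma bounded_finite: "finite F \<Longrightarrow> F \<in> B"
  using born_module by (simp add: born_module_def bornology_def)

lemma bounded_Un: "S \<in> B \<Longrightarrow> T \<in> B \<Longrightarrow> S \<union> T \<in> B"
  using born_module by (simp add: born_module_def bornology_def)

lemma bounded_subspace: "S \<in> B \<Longrightarrow> \<exists>T\<in>B. S \<subseteq> T \<and> subspace T"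
  using born_module by (simp add: born_module_def)

lemma compactoid_finite:
  assumes "finite F"
  shows "compactoid smul pi B F"
proof -
  obtain T where "T \<in> B" "F \<subseteq> T" "subspace T"
    using bounded_subspace[OF bounded_finite[OF assms]] by blast
  with compactoid_in_finite[OF assms] show ?thesis unfolding compactoid_iff by blast
qed

lemma compactoid_subset:
  assumes "compactoid smul pi B S" "S' \<subseteq> S"
  shows "compactoid smul pi B S'"
proof -
  obtain T where "T \<in> B" "subspace T" "compactoid_in pi T S"
    using assms(1) unfolding compactoid_iff by blast
  with compactoid_in_subset[OF _ assms(2)] show ?thesis unfolding compactoid_iff by blast
qed

lemma compactoid_Un:
  assumes "compactoid smul pi B S1" "compactoid smul pi B S2"
  shows "compactoid smul pi B (S1 \<union> S2)"
proof -
  obtain T1 T2 where "T1 \<in> B" "compactoid_in pi T1 S1" "T2 \<in> B" "compactoid_in pi T2 S2"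
    using assms unfolding compactoid_iff by blast
  moreover obtain Z where "Z \<in> B" "T1 \<union> T2 \<subseteq> Z" "subspace Z"
    using bounded_subspace[OF bounded_Un[OF \<open>T1 \<in> B\<close> \<open>T2 \<in> B\<close>]] by blast
  ultimately have "compactoid_in pi Z S1" "compactoid_in pi Z S2"
    using compactoid_in_mono by auto
  then have "compactoid_in pi Z (S1 \<union> S2)" by (rule compactoid_in_Un)
  with \<open>Z \<in> B\<close> \<open>subspace Z\<close> show ?thesis unfolding compactoid_iff by blast
qed

lemma compactoid_span:
  assumes "compactoid smul pi B S"
  shows "compactoid smul pi B (span S)"
proof -
  obtain T where "T \<in> B" "subspace T" "compactoid_in pi T S"
    using assms unfolding compactoid_iff by blast
  with compactoid_in_span show ?thesis unfolding compactoid_iff by blast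
qed

lemma bornology_compactoid_bornology: "bornology (compactoid_bornology smul pi B)"
  unfolding bornology_def compactoid_bornology_def
  by (auto intro: compactoid_finite compactoid_Un compactoid_subset)

lemma born_complete_compactoid_bornology:
  assumes "born_complete smul pi B" "inj (smul pi)"
  shows "born_complete smul pi (compactoid_bornology smul pi B)"
  unfolding born_complete_def compactoid_bornology_def
proof (intro ballI, unfold mem_Collect_eq)
  fix S assume "compactoid smul pi B S"
  then obtain T where "T \<in> B" "compactoid_in pi T S" unfolding compactoid_iff by blast
  then obtain T' where T': "T' \<in> B" "T \<subseteq> T'" "subspace T'" "padic_complete smul pi T'"
    using assms(1) unfolding born_complete_def by blast
  let ?C = "padic_closure pi T' (span S)"
  have "compactoid_in pi T' (span S)"
    using compactoid_in_mono[OF \<open>compactoid_in pi T S\<close> T'(2)] T'(3) by (rule compactoid_in_span)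
  then have "span S \<subseteq> T'" unfolding compactoid_in_def by blast
  have "compactoid_in pi T' ?C"
    using \<open>compactoid_in pi T' (span S)\<close> T'(3) by (rule compactoid_in_padic_closure)
  then have "compactoid smul pi B ?C" using T'(1,3) unfolding compactoid_iff by blast
  moreover have "S \<subseteq> ?C" using span_superset subset_padic_closure[OF T'(3)] by blast
  moreover have "subspace ?C" using T'(3) by (intro subspace_padic_closure subspace_span)
  moreover have "padic_complete smul pi ?C"
    using assms(2) T'(3,4) \<open>span S \<subseteq> T'\<close> by (intro padic_complete_padic_closure subspace_span)
  ultimately show "\<exists>C\<in>{S. compactoid smul pi B S}. S \<subseteq> C \<and> subspace C \<and> padic_complete smul pi C"
    by blast
qed

lemma inj_scale_born_torsionfree:
  assumes "born_torsionfree smul pi B" "pi \<noteq> 0"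
  shows "inj (smul pi)"
proof (rule injI)
  fix x y assume "smul pi x = smul pi y"
  then have "smul pi (x - y) = 0" by (simp add: scale_right_diff_distrib)
  with assms have "x - y = 0" unfolding born_torsionfree_def by blast
  then show "x = y" by simp
qed

lemma born_torsionfree_compactoid_bornology:
  fixes pi :: 'a
  assumes "\<And>x. x \<noteq> 0 \<Longrightarrow> \<exists>u n. u dvd 1 \<and> x = u * pi ^ n" and "pi \<noteq> 0"
    and tf: "born_torsionfree smul pi B"
  shows "born_torsionfree smul pi (compactoid_bornology smul pi B)"
proof -
  have bounded_vimage: "\<And>S. S \<in> B \<Longrightarrow> {x. smul pi x \<in> S} \<in> B"
    using tf unfolding born_torsionfree_def by blast
  have "compactoid smul pi B {x. smul pi x \<in> S}" if S: "compactoid smul pi B S" for S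
  proof -
    obtain T where "T \<in> B" "compactoid_in pi T S" using S unfolding compactoid_iff by blast
    moreover obtain U where "U \<in> B" "T \<union> {x. smul pi x \<in> T} \<subseteq> U" "subspace U"
      using bounded_subspace[OF bounded_Un[OF \<open>T \<in> B\<close> bounded_vimage[OF \<open>T \<in> B\<close>]]] by blast
    ultimately have "compactoid_in pi U {x. smul pi x \<in> S}"
      using assms(1) inj_scale_born_torsionfree[OF tf assms(2)]
      by (intro compactoid_in_vimage_scale[where T = T]) auto
    with \<open>U \<in> B\<close> \<open>subspace U\<close> show ?thesis unfolding compactoid_iff by blast
  qed
  with tf show ?thesis unfolding born_torsionfree_def compactoid_bornology_def by blast
qed

end

locale bornological_algebra =
  fixes smul :: "'a::comm_ring_1 \<Rightarrow> 'b::ring \<Rightarrow> 'b" and B :: "'b set set"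
  assumes born_algebra: "born_algebra smul B"
begin

sublocale bornological_module smul B
  using born_algebra by unfold_locales (simp add: born_algebra_def)

sublocale module_algebra smul
proof
  have compat: "\<forall>a x y. smul a (x * y) = smul a x * y \<and> smul a (x * y) = x * smul a y"
    using born_algebra unfolding born_algebra_def by (rule conjunct1[OF conjunct2])
  fix a x y
  show "smul a x * y = smul a (x * y)" "x * smul a y = smul a (x * y)"
    using compat by metis+
qed

lemma bounded_times: "S \<in> B \<Longrightarrow> T \<in> B \<Longrightarrow> S * T \<in> B"
  using born_algebra by (simp add: born_algebra_def set_times_eq_setcompr)

lemma compactoid_times:
  assumes "compactoid smul pi B S1" "compactoid smul pi B S2"
  shows "compactoid smul pi B (S1 * S2)"
proof -
  obtain T1 T2 where "T1 \<in> B" "compactoid_in pi T1 S1" "T2 \<in> B" "compactoid_in pi T2 S2"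
    using assms unfolding compactoid_iff by blast
  moreover obtain Z where "Z \<in> B" "T1 * T2 \<subseteq> Z" "subspace Z"
    using bounded_subspace[OF bounded_times[OF \<open>T1 \<in> B\<close> \<open>T2 \<in> B\<close>]] by blast
  ultimately have "compactoid_in pi Z (S1 * S2)" by (intro compactoid_in_times)
  with \<open>Z \<in> B\<close> \<open>subspace Z\<close> show ?thesis unfolding compactoid_iff by blast
qed

lemma born_algebra_compactoid_bornology: "born_algebra smul (compactoid_bornology smul pi B)"
  unfolding born_algebra_def born_module_def
proof (intro conjI ballI)
  show "module smul" by (rule module_axioms)
  show "bornology (compactoid_bornology smul pi B)" by (rule bornology_compactoid_bornology)
  show "\<forall>a x y. smul a (x * y) = smul a x * y \<and> smul a (x * y) = x * smul a y"
    by (simp add: mult_scale_left mult_scale_right)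
  fix S assume "S \<in> compactoid_bornology smul pi B"
  then show "\<exists>T\<in>compactoid_bornology smul pi B. S \<subseteq> T \<and> subspace T"
    unfolding compactoid_bornology_def using span_superset compactoid_span by blast
  fix T assume "T \<in> compactoid_bornology smul pi B"
  with \<open>S \<in> compactoid_bornology smul pi B\<close>
  show "{s * t | s t. s \<in> S \<and> t \<in> T} \<in> compactoid_bornology smul pi B"
    unfolding compactoid_bornology_def set_times_eq_setcompr[symmetric] by (simp add: compactoid_times)
qed

lemma semidagger_compactoid_bornology:
  assumes "semidagger smul pi B"
  shows "semidagger smul pi (compactoid_bornology smul pi B)"
  unfolding semidagger_def compactoid_bornology_def
proof (intro ballI, unfold mem_Collect_eq)
  fix S assume "compactoid smul pi B S"
  then obtain T where "T \<in> B" "compactoid_in pi T S" unfolding compactoid_iff by blast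
  define Z where "Z = span (\<Union>j. pmul smul pi j (setpow (T \<union> T * T) (Suc j)))"
  have "Z \<in> B"
    using assms bounded_Un[OF \<open>T \<in> B\<close> bounded_times[OF \<open>T \<in> B\<close> \<open>T \<in> B\<close>]]
    unfolding semidagger_def Z_def by blast
  have "subspace Z" unfolding Z_def by (rule subspace_span)
  have "pmul smul pi j (setpow (T \<union> T * T) (Suc j)) \<subseteq> Z" for j
    unfolding Z_def by (rule order_trans[OF _ span_superset]) blast
  with \<open>compactoid_in pi T S\<close> \<open>subspace Z\<close>
  have "compactoid_in pi Z (\<Union>i. pmul smul pi i (setpow S (Suc i)))"
    by (rule compactoid_in_UN_pmul_setpow)
  then have "compactoid_in pi Z (span (\<Union>i. pmul smul pi i (setpow S (Suc i))))"
    using \<open>subspace Z\<close> by (rule compactoid_in_span)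
  with \<open>Z \<in> B\<close> \<open>subspace Z\<close>
  show "compactoid smul pi B (span (\<Union>i. pmul smul pi i (setpow S (Suc i))))"
    unfolding compactoid_iff by blast
qed

end

theorem lemma4p8:
  fixes smul :: "'v::idom \<Rightarrow> 'd::ring \<Rightarrow> 'd" and pi :: 'v and B :: "'d set set"
  assumes "complete_dvr pi"
    and "dagger_algebra smul pi B"
  shows "dagger_algebra smul pi (compactoid_bornology smul pi B)"
proof -
  have alg: "born_algebra smul B" and complete: "born_complete smul pi B"
    and tf: "born_torsionfree smul pi B" and sd: "semidagger smul pi B"
    using assms(2) unfolding dagger_algebra_def by auto
  interpret bornological_algebra smul B by unfold_locales (rule alg)
  have unit_pow: "\<And>x. x \<noteq> 0 \<Longrightarrow> \<exists>u n. u dvd 1 \<and> x = u * pi ^ n" and "pi \<noteq> 0"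
    using assms(1) unfolding complete_dvr_def by auto
  have "born_complete smul pi (compactoid_bornology smul pi B)"
    using complete inj_scale_born_torsionfree[OF tf \<open>pi \<noteq> 0\<close>]
    by (rule born_complete_compactoid_bornology)
  then show ?thesis
    using born_algebra_compactoid_bornology semidagger_compactoid_bornology[OF sd]
      born_torsionfree_compactoid_bornology[OF unit_pow \<open>pi \<noteq> 0\<close> tf]
    unfolding dagger_algebra_def by blast
qed

end
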